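(* Let $G=(V,E)$ be a finite simple graph of order $n$ and let $T=n-1$. If $(x,y,z)$ is an optimal solution of the Time Step Model $\mathrm{TSM}(G,T)$ (minimizing $\sum_{v\in V}x^0_v$), then $C=\{v\in V\colon x^0_v=1\}$ is a minimum zero forcing set of $G$.
   Context: Zero forcing: under the standard color change rule a filled vertex $u$ can force a non-filled vertex $v$ if $v$ is the only non-filled neighbor of $u$; $C\subseteq V$ is a zero forcing set if, starting with $C$ filled and repeatedly forcing, all of $V$ becomes filled. A minimum zero forcing set is a zero forcing set of minimum size. $N(u)$ is the neighborhood of $u$ and $d(u)=|N(u)|$. Time Step Model: $A$ is the set of arcs containing $(u,v)$ and $(v,u)$ for each edge $\{u,v\}$, $[T]=\{1,\dots,T\}$. $\mathrm{TSM}(G,T)$ has binary variables $x^t_v$ ($v\in V$, $t\in\{0,\dots,T\}$), $y^t_a$ ($a\in A$, $t\in[T]$), $z^t$ ($t\in[T]$), with constraints: (1) $x^0_v+\sum_{t\in[T]}\sum_{a=(u,v)\in A}y^t_a=1$ for all $v$; (2) $y^t_a\leq x^{t-1}_u$ for all $a=(u,v)\in A$, $t\in[T]$; (3) $y^t_a\leq x^{t-1}_w$ for all $a=(u,v)\in A$, $w\in N(u)\setminus\{v\}$, $t\in[T]$; (4) $x^t_v=x^{t-1}_v+\sum_{a=(u,v)\in A}y^t_a$ for all $v$, $t\in[T]$; (5) $x^{t-1}_u-x^{t-1}_v+\sum_{w\in N(u)\setminus\{v\}}x^{t-1}_w\leq\sum_{a=(w,v)\in A}y^t_a+d(u)-1$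 for all $(u,v)\in A$, $t\in[T]$; (6) $\frac1n\sum_{v\in V}(x^t_v-x^{t-1}_v)-z^t\leq0$ for all $t\in[T]$; (7) $z^t-\sum_{v\in V}(x^t_v-x^{t-1}_v)\leq 0$ for all $t\in[T]$. Objective: minimize $\sum_{v\in V}x^0_v$. *)

theory Defs
  imports Complex_Main
begin

definition simple_graph :: "'a set \<Rightarrow> ('a \<Rightarrow> 'a \<Rightarrow> bool) \<Rightarrow> bool" where
  "simple_graph V E \<longleftrightarrow> finite V \<and> (\<forall>u v. E u v \<longrightarrow> u \<in> V \<and> v \<in> V) \<and>
     (\<forall>u v. E u v \<longrightarrow> E v u) \<and> (\<forall>u. \<not> E u u)"

definition nbhd :: "'a set \<Rightarrow> ('a \<Rightarrow> 'a \<Rightarrow> bool) \<Rightarrow> 'a \<Rightarrow> 'a set" where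
  "nbhd V E u = {w \<in> V. E u w}"

definition deg :: "'a set \<Rightarrow> ('a \<Rightarrow> 'a \<Rightarrow> bool) \<Rightarrow> 'a \<Rightarrow> nat" where
  "deg V E u = card (nbhd V E u)"

definition arcs :: "'a set \<Rightarrow> ('a \<Rightarrow> 'a \<Rightarrow> bool) \<Rightarrow> ('a \<times> 'a) set" where
  "arcs V E = {(u, v). u \<in> V \<and> v \<in> V \<and> E u v}"

(* Least set closed under forcing (the requirement that v is not yet filled is
   irrelevant for the closure). Set of vertices filled by repeatedly applying the standard colour change rule from C *)
inductive_set filled :: "'a set \<Rightarrow> ('a \<Rightarrow> 'a \<Rightarrow> bool) \<Rightarrow> 'a set \<Rightarrow> 'a set"
  for V E C where
  init: "c \<in> C \<Longrightarrow> c \<in> filled V E C"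
| force: "\<lbrakk> u \<in> filled V E C; v \<in> nbhd V E u;
            \<forall>w. w \<in> nbhd V E u \<and> w \<noteq> v \<longrightarrow> w \<in> filled V E C \<rbrakk> \<Longrightarrow> v \<in> filled V E C"

definition zero_forcing_set :: "'a set \<Rightarrow> ('a \<Rightarrow> 'a \<Rightarrow> bool) \<Rightarrow> 'a set \<Rightarrow> bool" where
  "zero_forcing_set V E C \<longleftrightarrow> C \<subseteq> V \<and> V \<subseteq> filled V E C"

definition min_zero_forcing_set :: "'a set \<Rightarrow> ('a \<Rightarrow> 'a \<Rightarrow> bool) \<Rightarrow> 'a set \<Rightarrow> bool" where
  "min_zero_forcing_set V E C \<longleftrightarrow> zero_forcing_set V E C \<and>
     (\<forall>C'. zero_forcing_set V E C' \<longrightarrow> card C \<le> card C')"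

definition binary :: "real \<Rightarrow> bool" where
  "binary r \<longleftrightarrow> r = 0 \<or> r = 1"

definition tsm_feasible :: "'a set \<Rightarrow> ('a \<Rightarrow> 'a \<Rightarrow> bool) \<Rightarrow> nat \<Rightarrow>
    ('a \<Rightarrow> nat \<Rightarrow> real) \<Rightarrow> ('a \<times> 'a \<Rightarrow> nat \<Rightarrow> real) \<Rightarrow> (nat \<Rightarrow> real) \<Rightarrow> bool" where
  "tsm_feasible V E T x y z \<longleftrightarrow>
     (\<forall>v\<in>V. \<forall>t\<in>{0..T}. binary (x v t)) \<and>
     (\<forall>a\<in>arcs V E. \<forall>t\<in>{1..T}. binary (y a t)) \<and>
     (\<forall>t\<in>{1..T}. binary (z t)) \<and>
     \<comment> \<open>(1)\<close>
     (\<forall>v\<in>V. x v 0 + (\<Sum>t\<in>{1..T}. \<Sum>a\<in>{a \<in> arcs V E. snd a = v}. y a t) = 1) \<and>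
     \<comment> \<open>(2)\<close>
     (\<forall>(u,v)\<in>arcs V E. \<forall>t\<in>{1..T}. y (u,v) t \<le> x u (t - 1)) \<and>
     \<comment> \<open>(3)\<close>
     (\<forall>(u,v)\<in>arcs V E. \<forall>w\<in>nbhd V E u - {v}. \<forall>t\<in>{1..T}. y (u,v) t \<le> x w (t - 1)) \<and>
     \<comment> \<open>(4)\<close>
     (\<forall>v\<in>V. \<forall>t\<in>{1..T}. x v t = x v (t - 1) + (\<Sum>a\<in>{a \<in> arcs V E. snd a = v}. y a t)) \<and>
     \<comment> \<open>(5)\<close>
     (\<forall>(u,v)\<in>arcs V E. \<forall>t\<in>{1..T}.
        x u (t - 1) - x v (t - 1) + (\<Sum>w\<in>nbhd V E u - {v}. x w (t - 1))
          \<le> (\<Sum>a\<in>{a \<in> arcs V E. snd a = v}. y a t) + real (deg V E u) - 1) \<and>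
     \<comment> \<open>(6)\<close>
     (\<forall>t\<in>{1..T}. (1 / real (card V)) * (\<Sum>v\<in>V. x v t - x v (t - 1)) - z t \<le> 0) \<and>
     \<comment> \<open>(7)\<close>
     (\<forall>t\<in>{1..T}. z t - (\<Sum>v\<in>V. x v t - x v (t - 1)) \<le> 0)"

definition tsm_objective :: "'a set \<Rightarrow> ('a \<Rightarrow> nat \<Rightarrow> real) \<Rightarrow> real" where
  "tsm_objective V x = (\<Sum>v\<in>V. x v 0)"

definition tsm_optimal :: "'a set \<Rightarrow> ('a \<Rightarrow> 'a \<Rightarrow> bool) \<Rightarrow> nat \<Rightarrow>
    ('a \<Rightarrow> nat \<Rightarrow> real) \<Rightarrow> ('a \<times> 'a \<Rightarrow> nat \<Rightarrow> real) \<Rightarrow> (nat \<Rightarrow> real) \<Rightarrow> bool" where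
  "tsm_optimal V E T x y z \<longleftrightarrow> tsm_feasible V E T x y z \<and>
     (\<forall>x' y' z'. tsm_feasible V E T x' y' z' \<longrightarrow> tsm_objective V x \<le> tsm_objective V x')"

end

theory Submission
  imports Defs
begin

text \<open>
  By constraints (2)--(4) of the Time Step Model, a vertex v changes from unfilled to filled at
  step t only through an arc (u,v) such that u and all other neighbours of u were filled at
  step t-1, i.e. by a legal force; by (1) every vertex is filled at step T. Hence the support C
  of x^0 of any feasible solution is a zero forcing set. Conversely, forcing from a zero forcing
  set C' in rounds, where each round fills every vertex that can currently be forced, fills all
  of V within |V| - |C'| \<le> n - 1 rounds, since each unfinished round fills a new vertex.
  Recording this process as indicator vectors gives a feasible solution of objective |C'|, so
  optimality of (x,y,z) yields |C| \<le> |C'|.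
\<close>

lemma sum_telescope_step:
  fixes f g :: "nat \<Rightarrow> 'a::ab_group_add"
  assumes "\<And>t. t \<in> {1..T} \<Longrightarrow> f t = f (t - 1) + g t"
  shows "f T = f 0 + (\<Sum>t = 1..T. g t)"
proof -
  have "(\<Sum>t = 1..T. g t) = (\<Sum>t = Suc 0..T. f t - f (t - 1))"
    using assms by (intro sum.cong) (auto simp: algebra_simps)
  also have "\<dots> = f T - f 0"
    by (rule sum_telescope'') simp
  finally show ?thesis
    by simp
qed

lemma tsm_feasibleD:
  assumes "tsm_feasible V E T x y z"
  shows tsm_binary_x: "v \<in> V \<Longrightarrow> t \<le> T \<Longrightarrow> x v t = 0 \<or> x v t = 1"
    and tsm_binary_y: "a \<in> arcs V E \<Longrightarrow> t \<in> {1..T} \<Longrightarrow> y a t = 0 \<or> y a t = 1"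
    and tsm_filled_once:
      "v \<in> V \<Longrightarrow> x v 0 + (\<Sum>t = 1..T. \<Sum>a\<in>{a \<in> arcs V E. snd a = v}. y a t) = 1"
    and tsm_forcer_filled:
      "(u, v) \<in> arcs V E \<Longrightarrow> t \<in> {1..T} \<Longrightarrow> y (u, v) t \<le> x u (t - 1)"
    and tsm_forcer_nbhd_filled:
      "(u, v) \<in> arcs V E \<Longrightarrow> w \<in> nbhd V E u - {v} \<Longrightarrow> t \<in> {1..T} \<Longrightarrow>
        y (u, v) t \<le> x w (t - 1)"
    and tsm_step:
      "v \<in> V \<Longrightarrow> t \<in> {1..T} \<Longrightarrow>
        x v t = x v (t - 1) + (\<Sum>a\<in>{a \<in> arcs V E. snd a = v}. y a t)"
  using assms unfolding tsm_feasible_def binary_def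
  by (simp_all, fastforce+)

lemma tsm_feasible_filled:
  assumes feas: "tsm_feasible V E T x y z"
  shows "v \<in> V \<Longrightarrow> t \<le> T \<Longrightarrow> x v t = 1 \<Longrightarrow> v \<in> filled V E {v \<in> V. x v 0 = 1}"
proof (induction t arbitrary: v)
  case 0
  then show ?case
    by (auto intro: filled.init)
next
  case (Suc t)
  let ?C = "{v \<in> V. x v 0 = 1}"
  have step: "Suc t \<in> {1..T}" and "t \<le> T"
    using Suc.prems(2) by auto
  have filled_if_ge_1: "w \<in> filled V E ?C" if "w \<in> V" "1 \<le> x w t" for w
    using tsm_binary_x[OF feas that(1) \<open>t \<le> T\<close>] Suc.IH[OF that(1) \<open>t \<le> T\<close>] that(2)
    by linarith
  show ?case
  proof (cases "x v t = 1")
    case True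
    then show ?thesis
      using Suc.IH Suc.prems(1) \<open>t \<le> T\<close> by blast
  next
    case False
    then have "x v t = 0"
      using tsm_binary_x[OF feas Suc.prems(1) \<open>t \<le> T\<close>] by blast
    then have "(\<Sum>a\<in>{a \<in> arcs V E. snd a = v}. y a (Suc t)) \<noteq> 0"
      using tsm_step[OF feas Suc.prems(1) step] Suc.prems(3) by simp
    then obtain u where arc: "(u, v) \<in> arcs V E" and "y (u, v) (Suc t) \<noteq> 0"
      by (rule sum.not_neutral_contains_not_neutral) auto
    then have y_1: "y (u, v) (Suc t) = 1"
      using tsm_binary_y[OF feas _ step] by blast
    have "u \<in> filled V E ?C"
      using arc tsm_forcer_filled[OF feas arc step] y_1
      by (intro filled_if_ge_1) (auto simp: arcs_def)
    moreover have "v \<in> nbhd V E u"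
      using arc by (simp add: arcs_def nbhd_def)
    moreover have "\<forall>w. w \<in> nbhd V E u \<and> w \<noteq> v \<longrightarrow> w \<in> filled V E ?C"
    proof (intro allI impI)
      fix w
      assume w: "w \<in> nbhd V E u \<and> w \<noteq> v"
      then show "w \<in> filled V E ?C"
        using tsm_forcer_nbhd_filled[OF feas arc _ step, of w] y_1
        by (intro filled_if_ge_1) (auto simp: nbhd_def)
    qed
    ultimately show ?thesis
      by (rule filled.force)
  qed
qed

lemma tsm_feasible_zero_forcing_set:
  assumes feas: "tsm_feasible V E T x y z"
  shows "zero_forcing_set V E {v \<in> V. x v 0 = 1}"
proof -
  have "x v T = 1" if "v \<in> V" for v
  proof -
    have "x v T = x v 0 + (\<Sum>t = 1..T. \<Sum>a\<in>{a \<in> arcs V E. snd a = v}. y a t)"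
      using tsm_step[OF feas that] by (rule sum_telescope_step)
    also have "\<dots> = 1"
      using tsm_filled_once[OF feas that] .
    finally show ?thesis .
  qed
  then show ?thesis
    using tsm_feasible_filled[OF feas] by (auto simp: zero_forcing_set_def)
qed

lemma tsm_objective_feasible:
  assumes "finite V" and feas: "tsm_feasible V E T x y z"
  shows "tsm_objective V x = real (card {v \<in> V. x v 0 = 1})"
proof -
  have "tsm_objective V x = (\<Sum>v\<in>V. of_bool (x v 0 = 1))"
    unfolding tsm_objective_def
    using tsm_binary_x[OF feas] by (intro sum.cong) auto
  then show ?thesis
    using assms(1) by (simp add: Int_def)
qed

definition force_step :: "'a set \<Rightarrow> ('a \<Rightarrow> 'a \<Rightarrow> bool) \<Rightarrow> 'a set \<Rightarrow> 'a set" where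
  "force_step V E S = S \<union> {v. \<exists>u\<in>S. v \<in> nbhd V E u \<and> nbhd V E u - {v} \<subseteq> S}"

primrec filled_after :: "'a set \<Rightarrow> ('a \<Rightarrow> 'a \<Rightarrow> bool) \<Rightarrow> 'a set \<Rightarrow> nat \<Rightarrow> 'a set" where
  "filled_after V E C 0 = C"
| "filled_after V E C (Suc t) = force_step V E (filled_after V E C t)"

lemma subset_force_step: "S \<subseteq> force_step V E S"
  by (simp add: force_step_def)

lemma force_step_subset: "S \<subseteq> V \<Longrightarrow> force_step V E S \<subseteq> V"
  by (auto simp: force_step_def nbhd_def)

lemma filled_after_mono: "s \<le> t \<Longrightarrow> filled_after V E C s \<subseteq> filled_after V E C t"
  by (rule lift_Suc_mono_le[of "filled_after V E C"]) (simp_all add: subset_force_step)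

lemma filled_after_subset: "C \<subseteq> V \<Longrightarrow> filled_after V E C t \<subseteq> V"
  by (induction t) (simp_all add: force_step_subset)

lemma filled_subset_closed:
  assumes "C \<subseteq> S" and "force_step V E S \<subseteq> S"
  shows "filled V E C \<subseteq> S"
proof
  fix v
  assume "v \<in> filled V E C"
  then show "v \<in> S"
  proof (induction rule: filled.induct)
    case (init c)
    then show ?case
      using assms(1) by blast
  next
    case (force u v)
    then have "v \<in> force_step V E S"
      by (auto simp: force_step_def)
    then show ?case
      using assms(2) by blast
  qed
qed

lemma zero_forcing_set_nonempty:
  assumes "zero_forcing_set V E C" and "V \<noteq> {}"
  shows "C \<noteq> {}"
proof
  assume "C = {}"
  then have "filled V E C \<subseteq> {}"
    by (intro filled_subset_closed) (auto simp: force_step_def)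
  with assms show False
    by (auto simp: zero_forcing_set_def)
qed

lemma zero_forcing_set_filled_after:
  assumes "finite V" and zfs: "zero_forcing_set V E C" and "card V \<le> card C + t"
  shows "V \<subseteq> filled_after V E C t"
proof -
  let ?F = "filled_after V E C"
  have C_V: "C \<subseteq> V" and V_filled: "V \<subseteq> filled V E C"
    using zfs by (auto simp: zero_forcing_set_def)
  have finite_F: "finite (?F t)" for t
    using filled_after_subset[OF C_V] \<open>finite V\<close> by (rule finite_subset)
  have "V \<subseteq> ?F t \<or> card C + t \<le> card (?F t)" for t
  proof (induction t)
    case 0
    then show ?case
      by simp
  next
    case (Suc t)
    have F_Suc: "?F t \<subseteq> ?F (Suc t)"
      by (simp add: subset_force_step)
    show ?case
    proof (cases "?F (Suc t) = ?F t")
      case True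
      then have "filled V E C \<subseteq> ?F t"
        using filled_after_mono[of 0 t V E C] by (intro filled_subset_closed) auto
      with V_filled F_Suc show ?thesis
        by blast
    next
      case False
      then have "card (?F t) < card (?F (Suc t))"
        using F_Suc by (intro psubset_card_mono[OF finite_F]) blast
      with Suc.IH F_Suc show ?thesis
        by auto
    qed
  qed
  then consider "V \<subseteq> ?F t" | "card V \<le> card (?F t)"
    using assms(3) by fastforce
  then show ?thesis
    using card_seteq[OF \<open>finite V\<close> filled_after_subset[OF C_V]] by cases auto
qed

lemma finite_arcs: "finite V \<Longrightarrow> finite (arcs V E)"
  by (rule finite_subset[of _ "V \<times> V"]) (auto simp: arcs_def)

locale forcing_process =
  fixes V :: "'a set" and E :: "'a \<Rightarrow> 'a \<Rightarrow> bool" and C :: "'a set"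
  assumes finite_V: "finite V" and C_subset_V: "C \<subseteq> V"
begin

abbreviation filled_at :: "nat \<Rightarrow> 'a set" where
  "filled_at \<equiv> filled_after V E C"

(* Truncated subtraction makes newly_filled 0 empty. *)
definition newly_filled :: "nat \<Rightarrow> 'a set" where
  "newly_filled t = filled_at t - filled_at (t - 1)"

definition forcer :: "nat \<Rightarrow> 'a \<Rightarrow> 'a" where
  "forcer t v =
    (SOME u. u \<in> filled_at (t - 1) \<and> v \<in> nbhd V E u \<and> nbhd V E u - {v} \<subseteq> filled_at (t - 1))"

definition sched_x :: "'a \<Rightarrow> nat \<Rightarrow> real" where
  "sched_x v t = of_bool (v \<in> filled_at t)"

definition sched_y :: "'a \<times> 'a \<Rightarrow> nat \<Rightarrow> real" where
  "sched_y a t = of_bool (snd a \<in> newly_filled t \<and> fst a = forcer t (snd a))"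

definition sched_z :: "nat \<Rightarrow> real" where
  "sched_z t = of_bool (newly_filled t \<noteq> {})"

lemma filled_at_subset: "filled_at t \<subseteq> V"
  using C_subset_V by (rule filled_after_subset)

lemma newly_filled_subset: "newly_filled t \<subseteq> V"
  using filled_at_subset by (auto simp: newly_filled_def)

lemma forcer_forces:
  assumes "v \<in> newly_filled t"
  shows "forcer t v \<in> filled_at (t - 1)" and "v \<in> nbhd V E (forcer t v)"
    and "nbhd V E (forcer t v) - {v} \<subseteq> filled_at (t - 1)"
proof -
  obtain s where "t = Suc s"
    using assms by (cases t) (auto simp: newly_filled_def)
  then have "\<exists>u. u \<in> filled_at (t - 1) \<and> v \<in> nbhd V E u \<and>
      nbhd V E u - {v} \<subseteq> filled_at (t - 1)"
    using assms by (auto simp: newly_filled_def force_step_def)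
  from someI_ex[OF this] show "forcer t v \<in> filled_at (t - 1)" and "v \<in> nbhd V E (forcer t v)"
    and "nbhd V E (forcer t v) - {v} \<subseteq> filled_at (t - 1)"
    unfolding forcer_def by blast+
qed

lemma sched_x_step: "sched_x v t = sched_x v (t - 1) + of_bool (v \<in> newly_filled t)"
  using filled_after_mono[of "t - 1" t V E C] by (auto simp: sched_x_def newly_filled_def)

lemma sum_sched_y_into:
  "(\<Sum>a\<in>{a \<in> arcs V E. snd a = v}. sched_y a t) = of_bool (v \<in> newly_filled t)"
proof (cases "v \<in> newly_filled t")
  case True
  let ?into = "{a \<in> arcs V E. snd a = v}" and ?arc = "(forcer t v, v)"
  have "?arc \<in> ?into"
    using forcer_forces[OF True] filled_at_subset by (auto simp: arcs_def nbhd_def)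
  then have "(\<Sum>a\<in>?into. sched_y a t) = sched_y ?arc t + (\<Sum>a\<in>?into - {?arc}. sched_y a t)"
    using finite_arcs[OF finite_V] by (intro sum.remove) auto
  also have "(\<Sum>a\<in>?into - {?arc}. sched_y a t) = 0"
    by (rule sum.neutral) (auto simp: sched_y_def)
  finally show ?thesis
    using True by (simp add: sched_y_def)
next
  case False
  then show ?thesis
    by (auto simp: sched_y_def intro: sum.neutral)
qed

lemma sched_x_arc_step:
  "sched_x v t = sched_x v (t - 1) + (\<Sum>a\<in>{a \<in> arcs V E. snd a = v}. sched_y a t)"
  using sched_x_step[of v t] by (simp add: sum_sched_y_into)

lemma sched_filled_once:
  assumes "V \<subseteq> filled_at T" and "v \<in> V"
  shows "sched_x v 0 + (\<Sum>t = 1..T. \<Sum>a\<in>{a \<in> arcs V E. snd a = v}. sched_y a t) = 1"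
proof -
  have "sched_x v T = sched_x v 0 + (\<Sum>t = 1..T. \<Sum>a\<in>{a \<in> arcs V E. snd a = v}. sched_y a t)"
    using sched_x_arc_step by (rule sum_telescope_step)
  with assms show ?thesis
    by (auto simp: sched_x_def)
qed

lemma sum_sched_x_diff: "(\<Sum>v\<in>V. sched_x v t - sched_x v (t - 1)) = real (card (newly_filled t))"
proof -
  have "(\<Sum>v\<in>V. sched_x v t - sched_x v (t - 1)) = (\<Sum>v\<in>V. of_bool (v \<in> newly_filled t))"
    by (intro sum.cong refl) (subst sched_x_step, simp)
  also have "\<dots> = real (card (V \<inter> newly_filled t))"
    using finite_V by (simp add: Int_def)
  also have "V \<inter> newly_filled t = newly_filled t"
    using newly_filled_subset by blast
  finally show ?thesis .
qed

lemma sched_z_bounds: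
  shows "real (card (newly_filled t)) / real (card V) \<le> sched_z t"
    and "sched_z t \<le> real (card (newly_filled t))"
proof -
  have "card (newly_filled t) \<le> card V"
    using finite_V newly_filled_subset by (rule card_mono)
  then show "real (card (newly_filled t)) / real (card V) \<le> sched_z t"
    by (cases "card V = 0") (auto simp: sched_z_def)
  show "sched_z t \<le> real (card (newly_filled t))"
    using finite_subset[OF newly_filled_subset finite_V]
    by (auto simp: sched_z_def Suc_le_eq card_gt_0_iff)
qed

lemma sched_force_rule:
  assumes "(u, v) \<in> arcs V E"
  shows "sched_x u s - sched_x v s + (\<Sum>w\<in>nbhd V E u - {v}. sched_x w s)
    \<le> of_bool (v \<in> newly_filled (Suc s)) + real (deg V E u) - 1"
proof -
  let ?A = "nbhd V E u - {v}"
  let ?k = "card (?A \<inter> filled_at s)"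
  have v_nbhd: "v \<in> nbhd V E u"
    using assms by (simp add: arcs_def nbhd_def)
  have finite_nbhd: "finite (nbhd V E u)"
    using finite_V by (simp add: nbhd_def)
  then have finite_A: "finite ?A"
    by simp
  have "deg V E u = Suc (card ?A)"
    unfolding deg_def using finite_nbhd v_nbhd by (rule card.remove)
  then have deg: "real (deg V E u) = real (card ?A) + 1"
    by simp
  have sum_A: "(\<Sum>w\<in>?A. sched_x w s) = real ?k"
    using finite_A by (simp add: sched_x_def Int_def)
  have "?k < card ?A" if "\<not> ?A \<subseteq> filled_at s"
    using that finite_A by (intro psubset_card_mono) auto
  then consider (missing) "?k < card ?A" | (all) "?A \<subseteq> filled_at s"
    by blast
  then show ?thesis
  proof cases
    case missing
    then have "real ?k + 1 \<le> real (card ?A)"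
      by linarith
    moreover have "sched_x u s - sched_x v s \<le> 1"
      by (simp add: sched_x_def)
    ultimately show ?thesis
      unfolding sum_A deg by simp
  next
    case all
    then have k: "?k = card ?A"
      by (simp add: Int_absorb2)
    have "v \<in> newly_filled (Suc s)" if "u \<in> filled_at s" "v \<notin> filled_at s"
      using that all v_nbhd by (auto simp: newly_filled_def force_step_def)
    then have "sched_x u s - sched_x v s \<le> of_bool (v \<in> newly_filled (Suc s))"
      by (auto simp: sched_x_def)
    then show ?thesis
      unfolding sum_A deg k by simp
  qed
qed

lemma tsm_feasible_sched:
  assumes "V \<subseteq> filled_at T"
  shows "tsm_feasible V E T sched_x sched_y sched_z"
proof -
  have "\<forall>v\<in>V. \<forall>t\<in>{0..T}. binary (sched_x v t)"
    and "\<forall>a\<in>arcs V E. \<forall>t\<in>{1..T}. binary (sched_y a t)"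
    and "\<forall>t\<in>{1..T}. binary (sched_z t)"
    by (simp_all add: binary_def sched_x_def sched_y_def sched_z_def)
  moreover have "\<forall>v\<in>V.
      sched_x v 0 + (\<Sum>t = 1..T. \<Sum>a\<in>{a \<in> arcs V E. snd a = v}. sched_y a t) = 1"
    using sched_filled_once[OF assms] by blast
  moreover have "\<forall>(u, v)\<in>arcs V E. \<forall>t\<in>{1..T}. sched_y (u, v) t \<le> sched_x u (t - 1)"
    using forcer_forces(1) by (auto simp: sched_y_def sched_x_def)
  moreover have "\<forall>(u, v)\<in>arcs V E. \<forall>w\<in>nbhd V E u - {v}. \<forall>t\<in>{1..T}.
      sched_y (u, v) t \<le> sched_x w (t - 1)"
    using forcer_forces(3) by (fastforce simp: sched_y_def sched_x_def)
  moreover have "\<forall>(u, v)\<in>arcs V E. \<forall>t\<in>{1..T}.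
      sched_x u (t - 1) - sched_x v (t - 1) + (\<Sum>w\<in>nbhd V E u - {v}. sched_x w (t - 1))
        \<le> (\<Sum>a\<in>{a \<in> arcs V E. snd a = v}. sched_y a t) + real (deg V E u) - 1"
  proof (intro ballI, clarify)
    fix u v t
    assume arc: "(u, v) \<in> arcs V E" and "t \<in> {1..T}"
    then obtain s where "t = Suc s"
      by (cases t) auto
    then show "sched_x u (t - 1) - sched_x v (t - 1) + (\<Sum>w\<in>nbhd V E u - {v}. sched_x w (t - 1))
        \<le> (\<Sum>a\<in>{a \<in> arcs V E. snd a = v}. sched_y a t) + real (deg V E u) - 1"
      using sched_force_rule[OF arc, of s] by (simp add: sum_sched_y_into)
  qed
  moreover have "\<forall>t\<in>{1..T}.
      (1 / real (card V)) * (\<Sum>v\<in>V. sched_x v t - sched_x v (t - 1)) - sched_z t \<le> 0"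
    and "\<forall>t\<in>{1..T}. sched_z t - (\<Sum>v\<in>V. sched_x v t - sched_x v (t - 1)) \<le> 0"
    unfolding sum_sched_x_diff using sched_z_bounds by simp_all
  moreover have "\<forall>v\<in>V. \<forall>t\<in>{1..T}.
      sched_x v t = sched_x v (t - 1) + (\<Sum>a\<in>{a \<in> arcs V E. snd a = v}. sched_y a t)"
    using sched_x_arc_step by blast
  ultimately show ?thesis
    unfolding tsm_feasible_def by (intro conjI) assumption+
qed

lemma tsm_objective_sched: "tsm_objective V sched_x = real (card C)"
  using finite_V C_subset_V by (simp add: tsm_objective_def sched_x_def inf.absorb2)

end

theorem corollary4p4:
  fixes V :: "'a set" and E :: "'a \<Rightarrow> 'a \<Rightarrow> bool"
    and x :: "'a \<Rightarrow> nat \<Rightarrow> real" and y :: "'a \<times> 'a \<Rightarrow> nat \<Rightarrow> real" and z :: "nat \<Rightarrow> real"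
    and n T :: nat
  assumes "simple_graph V E"
    and "n = card V"
    and "T = n - 1"
    and "tsm_optimal V E T x y z"
  shows "min_zero_forcing_set V E {v \<in> V. x v 0 = 1}"
proof -
  have finite_V: "finite V"
    using assms(1) by (simp add: simple_graph_def)
  have feas: "tsm_feasible V E T x y z"
    and optimal: "\<And>x' y' z'. tsm_feasible V E T x' y' z' \<Longrightarrow>
      tsm_objective V x \<le> tsm_objective V x'"
    using assms(4) unfolding tsm_optimal_def by blast+
  have "card {v \<in> V. x v 0 = 1} \<le> card C" if zfs: "zero_forcing_set V E C" for C
  proof -
    interpret forcing_process V E C
      using finite_V zfs by unfold_locales (auto simp: zero_forcing_set_def)
    have "card V \<le> card C + T"
    proof (cases "V = {}")
      case False
      then have "0 < card C"
        using zero_forcing_set_nonempty[OF zfs] finite_subset[OF C_subset_V finite_V]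
        by (simp add: card_gt_0_iff)
      then show ?thesis
        using assms(2,3) by linarith
    qed simp
    then have "tsm_feasible V E T sched_x sched_y sched_z"
      using finite_V zfs by (intro tsm_feasible_sched zero_forcing_set_filled_after)
    then have "tsm_objective V x \<le> real (card C)"
      using optimal tsm_objective_sched by metis
    then show ?thesis
      using tsm_objective_feasible[OF finite_V feas] by simp
  qed
  then show ?thesis
    using tsm_feasible_zero_forcing_set[OF feas] by (simp add: min_zero_forcing_set_def)
qed

end
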